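(* Let $P$ be a distribution on $\mathcal X\times\mathcal Y$, where every $\mathbf x\in\mathcal X\subseteq\mathbb R^d$ satisfies $\|\mathbf x\|\le1$ and $\mathcal Y=\{-1,+1\}$ or $[-1,1]$, and let $(\mathbf x_1,y_1),\dots,(\mathbf x_n,y_n)$ be i.i.d. from $P$. Let $R>0$, $\mathscr W=\{\mathbf w\in\mathbb R^d:\|\mathbf w\|\le R\}$, let $\ell:\mathbb R\to\mathbb R_+$ be a convex loss, $\alpha$-exp-concave on $|z|\le R$, with $|\ell'(z)|\le G$. Let $\mathcal L(\mathbf w)=\mathrm E[\ell(y\mathbf w^\top\mathbf x)]$, $\mathbf w_*\in\arg\min_{\mathscr W}\mathcal L$, and let $\widehat{\mathbf w}_*$ be a solution of $\min_{\mathbf w\in\mathscr W}\frac1n\sum_{i=1}^n\ell(y_i\mathbf w^\top\mathbf x_i)$. Let $\rho(\mathbf w)=\frac1{2R}\sqrt{\mathrm E[(\mathbf x^\top(\mathbf w-\mathbf w_* ))^2]}$ and $\widehat\rho=\rho(\widehat{\mathbf w}_* )$. Then for any $t>0$, with probability at least $1-2me^{-t}$, where $m=\lceil\log n\rceil$, \[ \mathcal L(\widehat{\mathbf w}_* )-\mathcal L(\mathbf w_* )\le GR\left(26\left[\widehat\rho\sqrt{\frac{\widetilde t}{n}}+\frac{\widetilde t}{n}\right]+6\widehat\rho\sqrt{\frac{\widetilde t}{n}}+\frac{2\widetilde t}{n}\right)+\frac{3\widetilde t}{n}, \] where $\widetilde t=t+2+d\log n$.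
   Context: $\alpha$-exp-concave means $z\mapsto\exp(-\alpha\ell(z))$ is concave for some $\alpha>0$. Expectations are over $(\mathbf x,y)\sim P$. *)

theory Defs
  imports "HOL-Probability.Probability"
begin

definition exp_concave_on :: "real \<Rightarrow> real set \<Rightarrow> (real \<Rightarrow> real) \<Rightarrow> bool" where
  "exp_concave_on \<alpha> S loss \<longleftrightarrow> \<alpha> > 0 \<and> concave_on S (\<lambda>z. exp (- \<alpha> * loss z))"

definition pop_risk :: "((real^'d) \<times> real) measure \<Rightarrow> (real \<Rightarrow> real) \<Rightarrow> real^'d \<Rightarrow> real" where
  "pop_risk P loss w = (\<integral>z. loss (snd z * (w \<bullet> fst z)) \<partial>P)"

definition emp_risk :: "nat \<Rightarrow> (nat \<Rightarrow> (real^'d) \<times> real) \<Rightarrow> (real \<Rightarrow> real) \<Rightarrow> real^'d \<Rightarrow> real" where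
  "emp_risk n S loss w = (1 / real n) * (\<Sum>i<n. loss (snd (S i) * (w \<bullet> fst (S i))))"

definition rho :: "((real^'d) \<times> real) measure \<Rightarrow> real \<Rightarrow> real^'d \<Rightarrow> real^'d \<Rightarrow> real" where
  "rho P R wstar w = (1 / (2 * R)) * sqrt (\<integral>z. (fst z \<bullet> (w - wstar))\<^sup>2 \<partial>P)"

end

theory Submission
  imports Defs
begin

(* Since |l'| \<le> G and |x|, |y| \<le> 1, the excess loss l(y v.x) - l(y wstar.x) is bounded by
   G |v - wstar| and has second moment at most G^2 E[(x.(v - wstar))^2].  Bernstein's inequality
   (from the moment generating function bound exp y \<le> 1 + y + y^2 for y \<le> 1) controls the
   deviation of its empirical mean at each of the n^d points of a net of the ball with resolution
   d R / n \<le> R t~/n, and the union bound costs n^d e^(-t~) = e^(-t-2).  The empirical minimiser lies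
   within d R / n of a net point, and Lipschitz continuity in w transfers the deviation bound to it.
   If G = 0 or n \<le> t~, the trivial bound 2 G R already suffices. *)

section \<open>Bernstein's inequality for i.i.d. sums\<close>

lemma exp_le_one_plus_self_plus_square:
  fixes y :: real
  assumes "y \<le> 1"
  shows "exp y \<le> 1 + y + y\<^sup>2"
proof (cases "0 \<le> y")
  case True
  with assms show ?thesis by (intro exp_bound)
next
  case False
  have "exp y * (1 - y) \<le> exp y * exp (- y)"
    using exp_ge_add_one_self[of "- y"] by (intro mult_left_mono) auto
  also have "\<dots> = 1" by (simp add: exp_minus)
  also have "\<dots> \<le> 1 - y * y\<^sup>2"
    using False by (simp add: mult_nonpos_nonneg)
  also have "\<dots> = (1 + y + y\<^sup>2) * (1 - y)"
    by (simp add: algebra_simps power2_eq_square)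
  finally show ?thesis using False by (simp add: mult_le_cancel_right)
qed

(* The exponent is u / \<sigma> in the sub-Gaussian regime \<sigma> \<ge> b u and 1 / b otherwise. *)
lemma Bernstein_exponent_exists:
  fixes b \<sigma> u :: real
  assumes "b > 0" "\<sigma> \<ge> 0" "u > 0"
  shows "\<exists>l>0. l * b \<le> 1 \<and> - l * (2 * \<sigma> * u + 2 * b * u\<^sup>2) + l\<^sup>2 * \<sigma>\<^sup>2 \<le> - u\<^sup>2"
proof (cases "b * u \<le> \<sigma>")
  case True
  hence \<sigma>: "\<sigma> > 0" using mult_pos_pos[OF assms(1,3)] by linarith
  have "- (u / \<sigma>) * (2 * \<sigma> * u + 2 * b * u\<^sup>2) + (u / \<sigma>)\<^sup>2 * \<sigma>\<^sup>2 = - u\<^sup>2 - 2 * b * u ^ 3 / \<sigma>"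
    using \<sigma> by (simp add: field_simps power2_eq_square power3_eq_cube)
  moreover have "0 \<le> 2 * b * u ^ 3 / \<sigma>" using assms \<sigma> by simp
  moreover have "u / \<sigma> * b \<le> 1" using True \<sigma> by (simp add: field_simps mult.commute)
  ultimately show ?thesis using assms \<sigma> by (intro exI[of _ "u / \<sigma>"]) auto
next
  case False
  have "\<sigma>\<^sup>2 \<le> (b * u)\<^sup>2" using False assms by (intro power_mono) auto
  hence "(1 / b)\<^sup>2 * \<sigma>\<^sup>2 \<le> u\<^sup>2" using assms by (simp add: field_simps power2_eq_square)
  moreover have "- (1 / b) * (2 * \<sigma> * u + 2 * b * u\<^sup>2) \<le> - 2 * u\<^sup>2"
    using assms by (simp add: field_simps power2_eq_square)
  ultimately show ?thesis using assms by (intro exI[of _ "1 / b"]) auto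
qed

lemma (in prob_space) nn_integral_exp_le_Bernstein:
  fixes X :: "'a \<Rightarrow> real"
  assumes [measurable]: "X \<in> borel_measurable M"
    and bounded: "AE x in M. \<bar>X x\<bar> \<le> b"
    and mean: "expectation X = 0" and variance: "expectation (\<lambda>x. (X x)\<^sup>2) \<le> \<sigma>\<^sup>2"
    and l: "0 \<le> l" "l * b \<le> 1"
  shows "(\<integral>\<^sup>+x. ennreal (exp (l * X x)) \<partial>M) \<le> ennreal (exp (l\<^sup>2 * \<sigma>\<^sup>2))"
proof -
  have int_X: "integrable M X"
    using bounded by (intro integrable_const_bound[where B = b]) auto
  have int_X2: "integrable M (\<lambda>x. (X x)\<^sup>2)"
  proof (rule integrable_const_bound[where B = "b\<^sup>2"])
    show "AE x in M. norm ((X x)\<^sup>2) \<le> b\<^sup>2"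
      using bounded by eventually_elim (simp, metis abs_ge_zero power2_abs power_mono)
  qed simp
  have quad_bound: "AE x in M. exp (l * X x) \<le> 1 + l * X x + l\<^sup>2 * (X x)\<^sup>2"
    using bounded
  proof eventually_elim
    case (elim x)
    have "l * X x \<le> l * b" using l elim by (intro mult_left_mono) auto
    with l have "l * X x \<le> 1" by linarith
    from exp_le_one_plus_self_plus_square[OF this] show ?case by (simp add: power_mult_distrib)
  qed
  have int_exp: "integrable M (\<lambda>x. exp (l * X x))"
  proof (rule integrable_const_bound[where B = "exp (l * b)"])
    show "AE x in M. norm (exp (l * X x)) \<le> exp (l * b)"
      using bounded by eventually_elim (use l in \<open>simp add: abs_le_iff mult_left_mono\<close>)
  qed simp
  have "expectation (\<lambda>x. exp (l * X x)) \<le> expectation (\<lambda>x. 1 + l * X x + l\<^sup>2 * (X x)\<^sup>2)"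
    using int_X int_X2 int_exp quad_bound by (intro integral_mono_AE) auto
  also have "\<dots> = 1 + l\<^sup>2 * expectation (\<lambda>x. (X x)\<^sup>2)"
    using int_X int_X2 mean by (simp add: prob_space)
  also have "\<dots> \<le> 1 + l\<^sup>2 * \<sigma>\<^sup>2" using variance by (simp add: mult_left_mono)
  also have "\<dots> \<le> exp (l\<^sup>2 * \<sigma>\<^sup>2)" by (rule exp_ge_add_one_self)
  finally show ?thesis
    using int_exp by (simp add: nn_integral_eq_integral ennreal_leI)
qed

lemma (in prob_space) iid_sum_Chernoff:
  fixes X :: "'a \<Rightarrow> real"
  assumes [measurable]: "X \<in> borel_measurable M"
    and l: "0 < l" and mgf: "(\<integral>\<^sup>+x. ennreal (exp (l * X x)) \<partial>M) \<le> ennreal c" and c: "0 \<le> c"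
  shows "measure (PiM {..<n} (\<lambda>_. M)) {S \<in> space (PiM {..<n} (\<lambda>_. M)). a \<le> (\<Sum>i<n. X (S i))}
           \<le> exp (- l * a) * c ^ n"
proof -
  define Q where "Q = PiM {..<n} (\<lambda>_. M)"
  interpret Q: prob_space Q unfolding Q_def by (intro prob_space_PiM prob_space_axioms)
  interpret product_sigma_finite "\<lambda>_::nat. M"
    unfolding product_sigma_finite_def using sigma_finite_measure_axioms by simp
  have "emeasure Q {S \<in> space Q. a \<le> (\<Sum>i<n. X (S i))}
        \<le> ennreal (exp (- l * a)) * (\<integral>\<^sup>+S. ennreal (exp (l * (\<Sum>i<n. X (S i)))) * indicator (space Q) S \<partial>Q)"
    by (rule Chernoff_ineq_nn_integral_ge[OF l]) (simp_all add: Q_def)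
  also have "(\<integral>\<^sup>+S. ennreal (exp (l * (\<Sum>i<n. X (S i)))) * indicator (space Q) S \<partial>Q)
           = (\<integral>\<^sup>+S. (\<Prod>i\<in>{..<n}. ennreal (exp (l * X (S i)))) \<partial>Q)"
    by (intro nn_integral_cong) (simp add: sum_distrib_left exp_sum prod_ennreal)
  also have "\<dots> = (\<Prod>i\<in>{..<n}. (\<integral>\<^sup>+x. ennreal (exp (l * X x)) \<partial>M))"
    unfolding Q_def by (rule product_nn_integral_prod) auto
  also have "ennreal (exp (- l * a)) * \<dots> \<le> ennreal (exp (- l * a)) * (\<Prod>i\<in>{..<n}. ennreal c)"
    using mgf by (intro mult_left_mono prod_mono_ennreal) auto
  also have "\<dots> = ennreal (exp (- l * a) * c ^ n)"
    using c by (simp add: ennreal_power ennreal_mult)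
  finally have "emeasure Q {S \<in> space Q. a \<le> (\<Sum>i<n. X (S i))} \<le> ennreal (exp (- l * a) * c ^ n)" .
  thus ?thesis
    unfolding Q_def[symmetric] by (simp add: Q.emeasure_eq_measure c)
qed

lemma (in prob_space) iid_sum_Bernstein_tail:
  fixes X :: "'a \<Rightarrow> real"
  assumes [measurable]: "X \<in> borel_measurable M"
    and bounded: "AE x in M. \<bar>X x\<bar> \<le> b" and b: "0 < b"
    and mean: "expectation X = 0" and variance: "expectation (\<lambda>x. (X x)\<^sup>2) \<le> \<sigma>\<^sup>2" and \<sigma>: "0 \<le> \<sigma>"
    and s: "0 < s" and n: "1 \<le> n"
  shows "measure (PiM {..<n} (\<lambda>_. M))
           {S \<in> space (PiM {..<n} (\<lambda>_. M)).
              real n * (2 * \<sigma> * sqrt (s / n) + 2 * b * (s / n)) \<le> (\<Sum>i<n. X (S i))}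
         \<le> exp (- s)"
proof -
  define u where "u = sqrt (s / n)"
  have u: "0 < u" "u\<^sup>2 = s / n" using s n by (simp_all add: u_def)
  obtain l where l: "0 < l" "l * b \<le> 1" "- l * (2 * \<sigma> * u + 2 * b * u\<^sup>2) + l\<^sup>2 * \<sigma>\<^sup>2 \<le> - u\<^sup>2"
    using Bernstein_exponent_exists[OF b \<sigma> u(1)] by blast
  have "measure (PiM {..<n} (\<lambda>_. M))
          {S \<in> space (PiM {..<n} (\<lambda>_. M)). real n * (2 * \<sigma> * u + 2 * b * u\<^sup>2) \<le> (\<Sum>i<n. X (S i))}
        \<le> exp (- l * (real n * (2 * \<sigma> * u + 2 * b * u\<^sup>2))) * exp (l\<^sup>2 * \<sigma>\<^sup>2) ^ n"
    using l by (intro iid_sum_Chernoff nn_integral_exp_le_Bernstein[OF _ bounded mean variance]) auto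
  also have "\<dots> = exp (real n * (- l * (2 * \<sigma> * u + 2 * b * u\<^sup>2) + l\<^sup>2 * \<sigma>\<^sup>2))"
    by (simp add: exp_of_nat_mult[symmetric] exp_add[symmetric] algebra_simps)
  also have "\<dots> \<le> exp (real n * - u\<^sup>2)"
    using l(3) by (intro exp_mono mult_left_mono) auto
  also have "real n * - u\<^sup>2 = - s" using u n by simp
  finally show ?thesis unfolding u_def using u(2) by (simp add: u_def)
qed

section \<open>A finite net of the Euclidean ball\<close>

lemma interval_grid_midpoint:
  fixes x R :: real and n :: nat
  assumes "1 \<le> n" "0 < R" "\<bar>x\<bar> \<le> R"
  shows "\<exists>k<n. \<bar>x - (- R + (2 * real k + 1) * R / n)\<bar> \<le> R / n"
proof -
  define s where "s = (x + R) / (2 * R) * n"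
  have a: "0 \<le> (x + R) / (2 * R)" "(x + R) / (2 * R) \<le> 1" using assms by auto
  have s: "0 \<le> s" "s \<le> n"
    unfolding s_def using mult_nonneg_nonneg[OF a(1), of "real n"] mult_right_mono[OF a(2), of "real n"]
    by simp_all
  define k where "k = min (n - 1) (nat \<lfloor>s\<rfloor>)"
  have "k < n" using assms by (simp add: k_def)
  have k: "\<bar>s - k - 1/2\<bar> \<le> 1/2"
  proof (cases "nat \<lfloor>s\<rfloor> \<le> n - 1")
    case True
    hence "real k = of_int \<lfloor>s\<rfloor>" using s by (simp add: k_def)
    thus ?thesis using of_int_floor_le[of s] real_of_int_floor_add_one_gt[of s] by linarith
  next
    case False
    hence "real n \<le> s" using assms by linarith
    moreover have "real k = n - 1" using False assms by (simp add: k_def of_nat_diff)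
    ultimately show ?thesis using s by linarith
  qed
  have "x - (- R + (2 * real k + 1) * R / n) = (2 * R / n) * (s - k - 1/2)"
    using assms by (simp add: s_def field_simps)
  hence "\<bar>x - (- R + (2 * real k + 1) * R / n)\<bar> = (2 * R / n) * \<bar>s - k - 1/2\<bar>"
    using assms by (simp add: abs_mult)
  also have "\<dots> \<le> (2 * R / n) * (1/2)" using k assms by (intro mult_left_mono) auto
  finally have "\<bar>x - (- R + (2 * real k + 1) * R / n)\<bar> \<le> R / n" by simp
  thus ?thesis using \<open>k < n\<close> by auto
qed

(* The centres of the n^d congruent subcubes of [-R, R]^d. *)
definition cube_grid :: "nat \<Rightarrow> real \<Rightarrow> (real^'d) set" where
  "cube_grid n R = (\<lambda>k. \<chi> i. - R + (2 * real (k i) + 1) * R / n) ` PiE UNIV (\<lambda>_. {..<n})"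

lemma finite_cube_grid: "finite (cube_grid n R)"
  unfolding cube_grid_def by (intro finite_imageI finite_PiE) auto

lemma card_cube_grid_le: "card (cube_grid n R :: (real^'d) set) \<le> n ^ CARD('d)"
proof -
  have "card (cube_grid n R :: (real^'d) set) \<le> card (PiE (UNIV :: 'd set) (\<lambda>_. {..<n}))"
    unfolding cube_grid_def by (intro card_image_le finite_PiE) auto
  thus ?thesis by (simp add: card_PiE)
qed

lemma cube_grid_cover:
  fixes w :: "real^'d"
  assumes "1 \<le> n" "0 < R" "norm w \<le> R"
  shows "\<exists>v\<in>cube_grid n R. norm (w - v) \<le> real CARD('d) * R / n"
proof -
  have "\<forall>i. \<exists>k<n. \<bar>w $ i - (- R + (2 * real k + 1) * R / n)\<bar> \<le> R / n"
  proof
    fix i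
    have "\<bar>w $ i\<bar> \<le> R" using component_le_norm_cart[of w i] assms(3) by simp
    with assms(1,2) show "\<exists>k<n. \<bar>w $ i - (- R + (2 * real k + 1) * R / n)\<bar> \<le> R / n"
      by (rule interval_grid_midpoint)
  qed
  then obtain k where k: "\<And>i. k i < n" "\<And>i. \<bar>w $ i - (- R + (2 * real (k i) + 1) * R / n)\<bar> \<le> R / n"
    by metis
  define v :: "real^'d" where "v = (\<chi> i. - R + (2 * real (k i) + 1) * R / n)"
  have "v \<in> cube_grid n R" unfolding cube_grid_def v_def using k(1) by (intro imageI) (simp add: PiE_iff)
  moreover have "norm (w - v) \<le> (\<Sum>i\<in>UNIV. \<bar>(w - v) $ i\<bar>)" by (rule norm_le_l1_cart)
  moreover have "(\<Sum>i\<in>UNIV. \<bar>(w - v) $ i\<bar>) \<le> (\<Sum>i\<in>(UNIV::'d set). R / n)"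
    using k(2) by (intro sum_mono) (simp add: v_def)
  ultimately show ?thesis by force
qed

lemma cball_finite_net:
  fixes n :: nat and R :: real
  assumes "1 \<le> n" "0 < R"
  defines "\<delta> \<equiv> real CARD('d) * R / n"
  obtains N :: "(real^'d) set"
  where "finite N" "card N \<le> n ^ CARD('d)" "N \<subseteq> cball 0 (R + \<delta>)"
    and "\<And>w. w \<in> cball 0 R \<Longrightarrow> \<exists>v\<in>N. norm (w - v) \<le> \<delta>"
proof -
  define N :: "(real^'d) set" where "N = {v \<in> cube_grid n R. \<exists>w\<in>cball 0 R. norm (w - v) \<le> \<delta>}"
  have grid: "N \<subseteq> cube_grid n R" unfolding N_def by blast
  hence "finite N" by (rule finite_subset) (rule finite_cube_grid)
  moreover have "card N \<le> n ^ CARD('d)"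
    using card_mono[OF finite_cube_grid grid] card_cube_grid_le[of n R, where 'd = 'd] by (rule order_trans)
  moreover have "N \<subseteq> cball 0 (R + \<delta>)"
  proof
    fix v assume "v \<in> N"
    then obtain w where "norm w \<le> R" "norm (w - v) \<le> \<delta>" by (auto simp: N_def)
    moreover have "norm v \<le> norm w + norm (w - v)" using norm_triangle_ineq4[of w "w - v"] by simp
    ultimately show "v \<in> cball 0 (R + \<delta>)" by simp
  qed
  moreover have "\<exists>v\<in>N. norm (w - v) \<le> \<delta>" if "w \<in> cball 0 R" for w
    using cube_grid_cover[OF assms(1,2), of w] that unfolding N_def \<delta>_def by force
  ultimately show ?thesis using that by blast
qed

section \<open>Lipschitz losses of linear predictors\<close>

definition unit_sample :: "(real^'d) \<times> real \<Rightarrow> bool" where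
  "unit_sample z \<longleftrightarrow> norm (fst z) \<le> 1 \<and> \<bar>snd z\<bar> \<le> 1"

lemma abs_inner_le_norm_right:
  fixes x v :: "'a::real_inner"
  assumes "norm x \<le> 1"
  shows "\<bar>x \<bullet> v\<bar> \<le> norm v"
  using Cauchy_Schwarz_ineq2[of x v] mult_right_mono[OF assms norm_ge_zero, of v] by simp

lemma inner_square_le_norm_square:
  fixes x v :: "'a::real_inner"
  assumes "norm x \<le> 1"
  shows "(x \<bullet> v)\<^sup>2 \<le> (norm v)\<^sup>2"
  using abs_inner_le_norm_right[OF assms, of v] by (metis abs_ge_zero power2_abs power_mono)

locale lipschitz_risk = prob_space P for P :: "((real^'d) \<times> real) measure" +
  fixes loss dloss :: "real \<Rightarrow> real" and G :: real
  assumes sets_P: "sets P = sets borel"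
    and bounded_x: "AE z in P. norm (fst z) \<le> 1"
    and bounded_y: "AE z in P. snd z \<in> {-1..1}"
    and loss_deriv: "\<And>z. (loss has_real_derivative dloss z) (at z)"
    and dloss_bounded: "\<And>z. \<bar>dloss z\<bar> \<le> G"
begin

definition loss_at :: "real^'d \<Rightarrow> (real^'d) \<times> real \<Rightarrow> real" where
  "loss_at w z = loss (snd z * (w \<bullet> fst z))"

(* rho P R wstar w = sqrt (moment2 (w - wstar)) / (2 R) *)
definition moment2 :: "real^'d \<Rightarrow> real" where
  "moment2 v = expectation (\<lambda>z. (fst z \<bullet> v)\<^sup>2)"

lemma moment2_nonneg: "0 \<le> moment2 v"
  by (simp add: moment2_def)

lemma G_nonneg: "0 \<le> G"
  using dloss_bounded[of 0] by linarith

lemma loss_lipschitz: "\<bar>loss a - loss b\<bar> \<le> G * \<bar>a - b\<bar>"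
  using field_differentiable_bound[of UNIV loss dloss G a b] loss_deriv dloss_bounded by simp

lemma borel_measurable_P_continuous:
  fixes f :: "(real^'d) \<times> real \<Rightarrow> real"
  assumes "continuous_on UNIV f"
  shows "f \<in> borel_measurable P"
  using borel_measurable_continuous_onI[OF assms] by (subst measurable_cong_sets[OF sets_P refl])

lemma measurable_unit_sample [measurable]: "Measurable.pred P unit_sample"
proof -
  have [measurable]: "(\<lambda>z. norm (fst z)) \<in> borel_measurable P" "(\<lambda>z. \<bar>snd z\<bar>) \<in> borel_measurable P"
    by (intro borel_measurable_P_continuous continuous_intros)+
  show ?thesis unfolding unit_sample_def by measurable
qed

lemma AE_unit_sample: "AE z in P. unit_sample z"
  using bounded_x bounded_y by eventually_elim (auto simp: unit_sample_def)

lemma loss_at_measurable [measurable]: "loss_at w \<in> borel_measurable P"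
proof -
  have "continuous_on UNIV loss"
    using loss_deriv by (intro continuous_at_imp_continuous_on) (meson DERIV_isCont)
  moreover have "continuous_on UNIV (\<lambda>z::(real^'d) \<times> real. snd z * (w \<bullet> fst z))"
    by (intro continuous_intros)
  ultimately have "continuous_on UNIV (loss_at w)"
    unfolding loss_at_def by (rule continuous_on_compose2) simp
  thus ?thesis by (rule borel_measurable_P_continuous)
qed

lemma inner_square_measurable [measurable]: "(\<lambda>z. (fst z \<bullet> v)\<^sup>2) \<in> borel_measurable P"
  by (intro borel_measurable_P_continuous continuous_intros)

lemma loss_at_diff_le:
  assumes "unit_sample z"
  shows "\<bar>loss_at u z - loss_at w z\<bar> \<le> G * \<bar>fst z \<bullet> (u - w)\<bar>"
proof -
  have "\<bar>snd z * (u \<bullet> fst z) - snd z * (w \<bullet> fst z)\<bar> = \<bar>snd z\<bar> * \<bar>fst z \<bullet> (u - w)\<bar>"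
    by (simp add: abs_mult inner_diff_right inner_commute right_diff_distrib[symmetric])
  also have "\<dots> \<le> \<bar>fst z \<bullet> (u - w)\<bar>"
    using assms by (intro mult_left_le_one_le) (auto simp: unit_sample_def)
  finally have "G * \<bar>snd z * (u \<bullet> fst z) - snd z * (w \<bullet> fst z)\<bar> \<le> G * \<bar>fst z \<bullet> (u - w)\<bar>"
    using G_nonneg by (rule mult_left_mono)
  thus ?thesis unfolding loss_at_def using loss_lipschitz order_trans by blast
qed

lemma loss_at_diff_le_norm:
  assumes "unit_sample z"
  shows "\<bar>loss_at u z - loss_at w z\<bar> \<le> G * norm (u - w)"
proof -
  have "\<bar>fst z \<bullet> (u - w)\<bar> \<le> norm (u - w)"
    using assms by (intro abs_inner_le_norm_right) (simp add: unit_sample_def)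
  hence "G * \<bar>fst z \<bullet> (u - w)\<bar> \<le> G * norm (u - w)" using G_nonneg by (rule mult_left_mono)
  with loss_at_diff_le[OF assms, of u w] show ?thesis by linarith
qed

lemma integrable_loss_at: "integrable P (loss_at w)"
proof (rule integrable_const_bound[where B = "\<bar>loss 0\<bar> + G * norm w"])
  show "AE z in P. norm (loss_at w z) \<le> \<bar>loss 0\<bar> + G * norm w"
    using AE_unit_sample
  proof eventually_elim
    case (elim z)
    have "loss_at 0 z = loss 0" by (simp add: loss_at_def)
    thus ?case using loss_at_diff_le_norm[OF elim, of w 0] by simp
  qed
qed simp

lemma integrable_inner_square: "integrable P (\<lambda>z. (fst z \<bullet> v)\<^sup>2)"
proof (rule integrable_const_bound[where B = "(norm v)\<^sup>2"])
  show "AE z in P. norm ((fst z \<bullet> v)\<^sup>2) \<le> (norm v)\<^sup>2"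
    using AE_unit_sample
  proof eventually_elim
    case (elim z)
    thus ?case using inner_square_le_norm_square[of "fst z" v] by (simp add: unit_sample_def)
  qed
qed simp

lemma pop_risk_eq: "pop_risk P loss w = expectation (loss_at w)"
  by (simp add: pop_risk_def loss_at_def[abs_def])

lemma emp_risk_eq: "emp_risk n S loss w = (\<Sum>i<n. loss_at w (S i)) / n"
  by (simp add: emp_risk_def loss_at_def)

lemma pop_risk_diff_le: "pop_risk P loss u - pop_risk P loss w \<le> G * norm (u - w)"
proof -
  have "pop_risk P loss u - pop_risk P loss w = expectation (\<lambda>z. loss_at u z - loss_at w z)"
    by (simp add: pop_risk_eq integrable_loss_at)
  also have "\<dots> \<le> expectation (\<lambda>z. G * norm (u - w))"
  proof (rule integral_mono_AE)
    show "AE z in P. loss_at u z - loss_at w z \<le> G * norm (u - w)"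
      using AE_unit_sample by eventually_elim (use loss_at_diff_le_norm[of _ u w] in fastforce)
  qed (simp_all add: integrable_loss_at)
  finally show ?thesis by (simp add: prob_space)
qed

lemma emp_risk_diff_le:
  fixes u w :: "real^'d"
  assumes "\<And>i. i < n \<Longrightarrow> unit_sample (S i)"
  shows "emp_risk n S loss u - emp_risk n S loss w \<le> G * norm (u - w)"
proof (cases "n = 0")
  case False
  have "(\<Sum>i<n. loss_at u (S i)) - (\<Sum>i<n. loss_at w (S i)) \<le> (\<Sum>i<n. G * norm (u - w))"
    unfolding sum_subtractf[symmetric] using assms loss_at_diff_le_norm[of _ u w]
    by (intro sum_mono) (simp add: abs_le_iff)
  with False show ?thesis by (simp add: emp_risk_eq diff_divide_distrib[symmetric] divide_le_eq mult.commute)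
qed (simp add: emp_risk_def G_nonneg)

lemma sqrt_moment2_le: "sqrt (moment2 v) \<le> sqrt 2 * sqrt (moment2 w) + sqrt 2 * norm (v - w)"
proof -
  have "moment2 v \<le> expectation (\<lambda>z. 2 * (fst z \<bullet> w)\<^sup>2 + 2 * (norm (v - w))\<^sup>2)"
    unfolding moment2_def
  proof (rule integral_mono_AE)
    show "AE z in P. (fst z \<bullet> v)\<^sup>2 \<le> 2 * (fst z \<bullet> w)\<^sup>2 + 2 * (norm (v - w))\<^sup>2"
      using AE_unit_sample
    proof eventually_elim
      case (elim z)
      have "(fst z \<bullet> (v - w))\<^sup>2 \<le> (norm (v - w))\<^sup>2"
        using elim inner_square_le_norm_square[of "fst z" "v - w"] by (simp add: unit_sample_def)
      moreover have "(fst z \<bullet> v)\<^sup>2 \<le> 2 * (fst z \<bullet> w)\<^sup>2 + 2 * (fst z \<bullet> (v - w))\<^sup>2"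
        using sum_squares_ge_zero[of "fst z \<bullet> w - fst z \<bullet> (v - w)" 0]
        by (simp add: inner_diff_right power2_eq_square algebra_simps)
      ultimately show ?case by linarith
    qed
  qed (simp_all add: integrable_inner_square)
  also have "\<dots> = 2 * moment2 w + 2 * (norm (v - w))\<^sup>2"
    by (simp add: moment2_def integrable_inner_square prob_space)
  finally have "sqrt (moment2 v) \<le> sqrt (2 * moment2 w + 2 * (norm (v - w))\<^sup>2)" by simp
  also have "\<dots> \<le> sqrt (2 * moment2 w) + sqrt (2 * (norm (v - w))\<^sup>2)"
    by (intro sqrt_add_le_add_sqrt) (simp_all add: moment2_nonneg)
  finally show ?thesis by (simp add: real_sqrt_mult)
qed

lemma variance_loss_at_diff_le: "variance (\<lambda>z. loss_at v z - loss_at w z) \<le> G\<^sup>2 * moment2 (v - w)"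
proof -
  define f where "f = (\<lambda>z. loss_at v z - loss_at w z)"
  have square: "AE z in P. (f z)\<^sup>2 \<le> G\<^sup>2 * (fst z \<bullet> (v - w))\<^sup>2"
    using AE_unit_sample
  proof eventually_elim
    case (elim z)
    have "\<bar>f z\<bar> \<le> \<bar>G * (fst z \<bullet> (v - w))\<bar>"
      unfolding f_def using loss_at_diff_le[OF elim] G_nonneg by (simp add: abs_mult)
    thus ?case by (metis abs_ge_zero power2_abs power_mono power_mult_distrib)
  qed
  have int_f: "integrable P f" by (simp add: f_def integrable_loss_at)
  have int_f2: "integrable P (\<lambda>z. (f z)\<^sup>2)"
  proof (rule integrable_const_bound[where B = "(G * norm (v - w))\<^sup>2"])
    show "AE z in P. norm ((f z)\<^sup>2) \<le> (G * norm (v - w))\<^sup>2"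
      using AE_unit_sample
    proof eventually_elim
      case (elim z)
      thus ?case unfolding f_def using loss_at_diff_le_norm[OF elim, of v w]
        by (simp, metis abs_ge_zero power2_abs power_mono)
    qed
  qed (simp add: f_def)
  have "variance f \<le> expectation (\<lambda>z. (f z)\<^sup>2)"
    using int_f int_f2 by (simp add: variance_eq)
  also have "\<dots> \<le> expectation (\<lambda>z. G\<^sup>2 * (fst z \<bullet> (v - w))\<^sup>2)"
    using square int_f2 integrable_inner_square by (intro integral_mono_AE) auto
  finally show ?thesis by (simp add: f_def moment2_def)
qed

lemma excess_deviation_tail:
  fixes v wstar :: "real^'d" and n :: nat
  assumes vw: "norm (v - wstar) \<le> r" and G: "0 < G" and r: "0 < r" and s: "0 < s" and n: "1 \<le> n"
  shows "measure (PiM {..<n} (\<lambda>_. P))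
           {S \<in> space (PiM {..<n} (\<lambda>_. P)).
              emp_risk n S loss v - emp_risk n S loss wstar
                + (2 * G * sqrt (moment2 (v - wstar)) * sqrt (s / n) + 4 * G * r * (s / n))
              \<le> pop_risk P loss v - pop_risk P loss wstar}
         \<le> exp (- s)"
proof -
  define f where "f = (\<lambda>z. loss_at v z - loss_at wstar z)"
  define c where "c = pop_risk P loss v - pop_risk P loss wstar"
  have c: "c = expectation f" by (simp add: c_def f_def pop_risk_eq integrable_loss_at)
  have Gr: "G * norm (v - wstar) \<le> G * r" using vw G by (intro mult_left_mono) auto
  have c_bound: "\<bar>c\<bar> \<le> G * norm (v - wstar)"
    using pop_risk_diff_le[of v wstar] pop_risk_diff_le[of wstar v]
    by (simp add: c_def abs_le_iff norm_minus_commute)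
  have bounded: "AE z in P. \<bar>c - f z\<bar> \<le> 2 * G * r"
    using AE_unit_sample
  proof eventually_elim
    case (elim z)
    thus ?case using loss_at_diff_le_norm[OF elim, of v wstar] c_bound Gr by (simp add: f_def abs_le_iff)
  qed
  have "expectation (\<lambda>z. (c - f z)\<^sup>2) = variance f" by (simp add: c power2_commute)
  also have "\<dots> \<le> (G * sqrt (moment2 (v - wstar)))\<^sup>2"
    using variance_loss_at_diff_le[of v wstar] by (simp add: f_def power_mult_distrib moment2_nonneg)
  finally have variance: "expectation (\<lambda>z. (c - f z)\<^sup>2) \<le> (G * sqrt (moment2 (v - wstar)))\<^sup>2" .
  define \<epsilon> where "\<epsilon> = 2 * G * sqrt (moment2 (v - wstar)) * sqrt (s / n) + 4 * G * r * (s / n)"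
  have "\<epsilon> = 2 * (G * sqrt (moment2 (v - wstar))) * sqrt (s / n) + 2 * (2 * G * r) * (s / n)"
    by (simp add: \<epsilon>_def)
  hence "measure (PiM {..<n} (\<lambda>_. P))
           {S \<in> space (PiM {..<n} (\<lambda>_. P)). real n * \<epsilon> \<le> (\<Sum>i<n. c - f (S i))} \<le> exp (- s)"
    using bounded variance G r s n moment2_nonneg
    by (simp only:) (intro iid_sum_Bernstein_tail; simp add: f_def c prob_space integrable_loss_at)
  moreover have "real n * \<epsilon> \<le> (\<Sum>i<n. c - f (S i)) \<longleftrightarrow>
                   emp_risk n S loss v - emp_risk n S loss wstar + \<epsilon> \<le> c" for S
  proof -
    have "(\<Sum>i<n. c - f (S i)) = real n * (c - (emp_risk n S loss v - emp_risk n S loss wstar))"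
      using n by (simp add: f_def emp_risk_eq sum_subtractf right_diff_distrib)
    thus ?thesis using n by (simp add: mult_le_cancel_left_pos) linarith
  qed
  ultimately show ?thesis unfolding \<epsilon>_def c_def by simp
qed

section \<open>Uniform deviations over a net\<close>

lemma AE_unit_samples:
  fixes n :: nat
  shows "AE S in PiM {..<n} (\<lambda>_. P). \<forall>i<n. unit_sample (S i)"
proof -
  have "AE S in PiM {..<n} (\<lambda>_. P). \<forall>i\<in>{..<n}. unit_sample (S i)"
    using AE_unit_sample by (intro AE_finite_allI AE_PiM_component prob_space_axioms) simp_all
  thus ?thesis by (rule eventually_mono) simp
qed

lemma uniform_excess_deviation:
  fixes N :: "(real^'d) set" and wstar :: "real^'d" and n :: nat
  assumes N: "finite N" "\<And>v. v \<in> N \<Longrightarrow> norm (v - wstar) \<le> r"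
    and G: "0 < G" and r: "0 < r" and s: "0 < s" and n: "1 \<le> n"
  defines "Q \<equiv> PiM {..<n} (\<lambda>_. P)"
  obtains E where "E \<in> sets Q" and "1 - card N * exp (- s) \<le> measure Q E"
    and "\<And>S i. S \<in> E \<Longrightarrow> i < n \<Longrightarrow> unit_sample (S i)"
    and "\<And>S v. S \<in> E \<Longrightarrow> v \<in> N \<Longrightarrow>
           pop_risk P loss v - pop_risk P loss wstar
           < emp_risk n S loss v - emp_risk n S loss wstar
             + (2 * G * sqrt (moment2 (v - wstar)) * sqrt (s / n) + 4 * G * r * (s / n))"
proof -
  interpret Q: prob_space Q unfolding Q_def by (intro prob_space_PiM prob_space_axioms)
  define \<epsilon> where "\<epsilon> v = 2 * G * sqrt (moment2 (v - wstar)) * sqrt (s / n) + 4 * G * r * (s / n)" for v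
  define bad where "bad v = {S \<in> space Q. emp_risk n S loss v - emp_risk n S loss wstar + \<epsilon> v
                                          \<le> pop_risk P loss v - pop_risk P loss wstar}" for v
  define E where "E = {S \<in> space Q. (\<forall>i<n. unit_sample (S i)) \<and>
                (\<forall>v\<in>N. pop_risk P loss v - pop_risk P loss wstar
                          < emp_risk n S loss v - emp_risk n S loss wstar + \<epsilon> v)}"
  have [measurable]: "bad v \<in> sets Q" for v
    unfolding bad_def Q_def emp_risk_eq by measurable
  have E: "E \<in> sets Q"
    unfolding E_def Q_def emp_risk_eq using N(1) by measurable
  have "AE S in Q. S \<in> space Q - E \<longrightarrow> S \<in> (\<Union>v\<in>N. bad v)"
    using AE_unit_samples[of n] unfolding Q_def[symmetric]
    by eventually_elim (auto simp: E_def bad_def not_less)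
  hence "measure Q (space Q - E) \<le> measure Q (\<Union>v\<in>N. bad v)"
    using N(1) by (intro Q.finite_measure_mono_AE) auto
  also have "\<dots> \<le> (\<Sum>v\<in>N. measure Q (bad v))"
    using N(1) by (intro Q.finite_measure_subadditive_finite) auto
  also have "\<dots> \<le> (\<Sum>v\<in>N. exp (- s))"
    unfolding bad_def Q_def \<epsilon>_def using N(2) G r s n by (intro sum_mono excess_deviation_tail) auto
  finally have "1 - card N * exp (- s) \<le> measure Q E"
    using Q.prob_compl[OF E] by simp
  with E show ?thesis using that unfolding E_def \<epsilon>_def by blast
qed

lemma excess_risk_le_of_net_deviation:
  fixes w v wstar :: "real^'d"
  assumes samples: "\<And>i. i < n \<Longrightarrow> unit_sample (S i)"
    and wv: "norm (w - v) \<le> \<delta>" and \<delta>: "\<delta> \<le> R * \<tau>" and \<tau>: "0 \<le> \<tau>" "\<tau> \<le> 1" and R: "0 < R"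
    and erm: "emp_risk n S loss w \<le> emp_risk n S loss wstar"
    and dev: "pop_risk P loss v - pop_risk P loss wstar
              < emp_risk n S loss v - emp_risk n S loss wstar
                + (2 * G * sqrt (moment2 (v - wstar)) * sqrt \<tau> + 12 * G * R * \<tau>)"
  shows "pop_risk P loss w - pop_risk P loss wstar
         \<le> 6 * G * R * rho P R wstar w * sqrt \<tau> + 17 * G * R * \<tau>"
proof -
  define \<rho> where "\<rho> = rho P R wstar w"
  have \<rho>: "0 \<le> \<rho>" "sqrt (moment2 (w - wstar)) = 2 * R * \<rho>"
    using R by (simp_all add: \<rho>_def rho_def moment2_def)
  have "0 \<le> \<delta>" using wv norm_ge_zero[of "w - v"] by linarith
  have "G * norm (w - v) \<le> G * \<delta>" using wv G_nonneg by (rule mult_left_mono)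
  hence excess: "pop_risk P loss w - pop_risk P loss wstar
         < 2 * G * sqrt \<tau> * sqrt (moment2 (v - wstar)) + 12 * (G * R * \<tau>) + 2 * (G * \<delta>)"
    using pop_risk_diff_le[of w v] emp_risk_diff_le[of n S v w] samples erm dev
    by (simp add: norm_minus_commute algebra_simps)
  have "sqrt 2 \<le> (3/2 :: real)" by (rule real_le_lsqrt) (auto simp: power2_eq_square)
  have "sqrt (moment2 (v - wstar)) \<le> sqrt 2 * sqrt (moment2 (w - wstar)) + sqrt 2 * norm (v - w)"
    using sqrt_moment2_le[of "v - wstar" "w - wstar"] by simp
  also have "\<dots> \<le> 3/2 * (2 * R * \<rho>) + 3/2 * \<delta>"
  proof (rule add_mono)
    show "sqrt 2 * sqrt (moment2 (w - wstar)) \<le> 3/2 * (2 * R * \<rho>)"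
      using mult_right_mono[OF \<open>sqrt 2 \<le> 3/2\<close>, of "2 * R * \<rho>"] \<rho> R by simp
    have "norm (v - w) \<le> \<delta>" using wv by (simp add: norm_minus_commute)
    thus "sqrt 2 * norm (v - w) \<le> 3/2 * \<delta>"
      using mult_mono[OF \<open>sqrt 2 \<le> 3/2\<close>] by simp
  qed
  finally have m: "2 * G * sqrt \<tau> * sqrt (moment2 (v - wstar)) \<le> 2 * G * sqrt \<tau> * (3 * R * \<rho> + 3/2 * \<delta>)"
    using G_nonneg \<tau>(1) by (intro mult_left_mono) auto
  have "\<delta> * sqrt \<tau> \<le> \<delta>" using \<tau>(2) \<open>0 \<le> \<delta>\<close> by (intro mult_left_le) simp_all
  with \<delta> have "\<delta> * sqrt \<tau> \<le> R * \<tau>" by linarith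
  hence "G * (\<delta> * sqrt \<tau>) \<le> G * (R * \<tau>)" "G * \<delta> \<le> G * (R * \<tau>)"
    using G_nonneg \<delta> by (simp_all add: mult_left_mono)
  with excess m show ?thesis by (simp add: \<rho>_def algebra_simps)
qed

lemma erm_excess_risk_high_probability:
  fixes n :: nat and R s :: real and wstar :: "real^'d"
  assumes n: "1 \<le> n" and R: "0 < R" and G: "0 < G" and wstar: "norm wstar \<le> R"
    and s: "real CARD('d) \<le> s" "s \<le> n"
  defines "Q \<equiv> PiM {..<n} (\<lambda>_. P)"
  obtains E where "E \<in> sets Q" and "1 - real n ^ CARD('d) * exp (- s) \<le> measure Q E"
    and "\<And>S w. S \<in> E \<Longrightarrow> w \<in> cball 0 R \<Longrightarrow> emp_risk n S loss w \<le> emp_risk n S loss wstar \<Longrightarrow>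
           pop_risk P loss w - pop_risk P loss wstar
           \<le> 6 * G * R * rho P R wstar w * sqrt (s / n) + 17 * G * R * (s / n)"
proof -
  define \<delta> where "\<delta> = real CARD('d) * R / n"
  have "0 < real CARD('d)" by simp
  with s(1) have "0 < s" by linarith
  hence \<tau>: "0 \<le> s / n" "s / n \<le> 1" using s(2) n by simp_all
  have "real CARD('d) * R / n \<le> s * R / n"
    using s(1) R by (intro divide_right_mono mult_right_mono) auto
  hence \<delta>: "\<delta> \<le> R * (s / n)" by (simp add: \<delta>_def mult.commute)
  have "R * (s / n) \<le> R" using R by (intro mult_left_le[OF \<tau>(2)]) simp
  with \<delta> have "\<delta> \<le> R" by linarith
  obtain N :: "(real^'d) set" where N: "finite N" "card N \<le> n ^ CARD('d)" "N \<subseteq> cball 0 (R + \<delta>)"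
    and cover: "\<And>w. w \<in> cball 0 R \<Longrightarrow> \<exists>v\<in>N. norm (w - v) \<le> \<delta>"
    using cball_finite_net[OF n R] unfolding \<delta>_def by blast
  have near: "norm (v - wstar) \<le> 3 * R" if "v \<in> N" for v
  proof -
    have "norm v \<le> R + \<delta>" using N(3) that by auto
    thus ?thesis using norm_triangle_ineq4[of v wstar] wstar \<open>\<delta> \<le> R\<close> by linarith
  qed
  have "0 < 3 * R" using R by simp
  obtain E :: "(nat \<Rightarrow> (real^'d) \<times> real) set"
    where E: "E \<in> sets Q" "1 - card N * exp (- s) \<le> measure Q E"
    and E_unit: "\<And>S i. S \<in> E \<Longrightarrow> i < n \<Longrightarrow> unit_sample (S i)"
    and E_dev: "\<And>S v. S \<in> E \<Longrightarrow> v \<in> N \<Longrightarrow>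
           pop_risk P loss v - pop_risk P loss wstar
           < emp_risk n S loss v - emp_risk n S loss wstar
             + (2 * G * sqrt (moment2 (v - wstar)) * sqrt (s / n) + 4 * G * (3 * R) * (s / n))"
    using uniform_excess_deviation[OF N(1) near G \<open>0 < 3 * R\<close> \<open>0 < s\<close> n, folded Q_def] by blast
  have "real (card N) * exp (- s) \<le> real n ^ CARD('d) * exp (- s)"
    using N(2) by (intro mult_right_mono) (auto simp: of_nat_power[symmetric] simp del: of_nat_power)
  with E(2) have "1 - real n ^ CARD('d) * exp (- s) \<le> measure Q E" by linarith
  moreover have "pop_risk P loss w - pop_risk P loss wstar
      \<le> 6 * G * R * rho P R wstar w * sqrt (s / n) + 17 * G * R * (s / n)"
    if S: "S \<in> E" and w: "w \<in> cball 0 R" and erm: "emp_risk n S loss w \<le> emp_risk n S loss wstar" for S w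
  proof -
    obtain v where v: "v \<in> N" "norm (w - v) \<le> \<delta>" using cover[OF w] by blast
    from E_dev[OF S v(1)]
    have dev: "pop_risk P loss v - pop_risk P loss wstar
          < emp_risk n S loss v - emp_risk n S loss wstar
            + (2 * G * sqrt (moment2 (v - wstar)) * sqrt (s / n) + 12 * G * R * (s / n))"
      by (simp add: mult_ac)
    show ?thesis
      by (rule excess_risk_le_of_net_deviation[OF _ v(2) \<delta> \<tau> R erm dev]) (rule E_unit[OF S])
  qed
  ultimately show ?thesis using that E(1) by blast
qed

lemma excess_risk_le_diameter:
  fixes w wstar :: "real^'d" and n :: nat
  assumes "w \<in> cball 0 R" "wstar \<in> cball 0 R" "G = 0 \<or> real n \<le> s" "1 \<le> n"
  shows "pop_risk P loss w - pop_risk P loss wstar \<le> 2 * G * R * (s / n)"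
proof -
  have "norm (w - wstar) \<le> 2 * R"
    using assms(1,2) norm_triangle_ineq4[of w wstar] by simp
  hence "pop_risk P loss w - pop_risk P loss wstar \<le> 2 * G * R"
    using pop_risk_diff_le[of w wstar] mult_left_mono[OF _ G_nonneg] by fastforce
  also have "\<dots> \<le> 2 * G * R * (s / n)"
  proof (cases "G = 0")
    case False
    with assms(3,4) have "1 \<le> s / n" by simp
    moreover have "0 \<le> 2 * G * R" using assms(2) G_nonneg by (simp add: order_trans[OF norm_ge_zero])
    ultimately show ?thesis using mult_left_mono[of 1 "s / n" "2 * G * R"] by simp
  qed simp
  finally show ?thesis .
qed

end

lemma confidence_parameter_bounds:
  fixes n d :: nat and t :: real
  defines "\<tau> \<equiv> t + 2 + real d * ln (real n)"
  assumes t: "0 < t" and n: "\<tau> < n"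
  shows "real d \<le> \<tau>" and "real n ^ d * exp (- \<tau>) \<le> 2 * real (nat \<lceil>ln (real n)\<rceil>) * exp (- t)"
proof -
  have "0 \<le> ln (real n)" by (cases "n = 0") simp_all
  hence "0 \<le> real d * ln (real n)" by simp
  hence n2: "2 < real n" using n t unfolding \<tau>_def by linarith
  moreover from this have "exp 1 \<le> real n" using exp_le by simp
  ultimately have ln_n: "1 \<le> ln (real n)" by (simp add: ln_ge_iff)
  hence "real d * 1 \<le> real d * ln (real n)" by (intro mult_left_mono) auto
  thus "real d \<le> \<tau>" using t unfolding \<tau>_def by linarith
  have "real n ^ d = exp (real d * ln (real n))"
    using n2 by (simp add: exp_of_nat_mult)
  hence "real n ^ d * exp (- \<tau>) = exp (- t - 2)"
    by (simp add: \<tau>_def exp_add[symmetric])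
  also have "\<dots> \<le> 1 * exp (- t)" by simp
  also have "\<dots> \<le> 2 * real (nat \<lceil>ln (real n)\<rceil>) * exp (- t)"
    using ln_n by (intro mult_right_mono) (linarith, simp)
  finally show "real n ^ d * exp (- \<tau>) \<le> 2 * real (nat \<lceil>ln (real n)\<rceil>) * exp (- t)" .
qed

lemma (in lipschitz_risk) erm_excess_risk_bound:
  fixes n :: nat and R t :: real and wstar :: "real^'d"
    and what :: "(nat \<Rightarrow> (real^'d) \<times> real) \<Rightarrow> real^'d"
  defines "Q \<equiv> PiM {..<n} (\<lambda>_. P)" and "tt \<equiv> t + 2 + real CARD('d) * ln (real n)"
  assumes n: "1 \<le> n" and R: "0 < R" and t: "0 < t" and wstar: "wstar \<in> cball 0 R"
    and erm: "\<And>S. S \<in> space Q \<Longrightarrow>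
                what S \<in> cball 0 R \<and> emp_risk n S loss (what S) \<le> emp_risk n S loss wstar"
  shows "\<exists>E \<in> sets Q. 1 - 2 * real (nat \<lceil>ln (real n)\<rceil>) * exp (- t) \<le> measure Q E \<and>
           (\<forall>S \<in> E. pop_risk P loss (what S) - pop_risk P loss wstar
                      \<le> 6 * G * R * rho P R wstar (what S) * sqrt (tt / n) + 17 * G * R * (tt / n))"
proof (cases "G = 0 \<or> real n \<le> tt")
  case True
  interpret Q: prob_space Q unfolding Q_def by (intro prob_space_PiM prob_space_axioms)
  have "pop_risk P loss (what S) - pop_risk P loss wstar
           \<le> 6 * G * R * rho P R wstar (what S) * sqrt (tt / n) + 17 * G * R * (tt / n)"
    if "S \<in> space Q" for S
  proof -
    have "pop_risk P loss (what S) - pop_risk P loss wstar \<le> 2 * G * R * (tt / n)"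
      using excess_risk_le_diameter[OF _ wstar True n] erm[OF that] by blast
    moreover have "0 \<le> 6 * G * R * rho P R wstar (what S) * sqrt (tt / n) + 15 * G * R * (tt / n)"
      using G_nonneg R n t by (simp add: tt_def rho_def)
    ultimately show ?thesis by linarith
  qed
  hence "\<forall>S\<in>space Q. pop_risk P loss (what S) - pop_risk P loss wstar
           \<le> 6 * G * R * rho P R wstar (what S) * sqrt (tt / n) + 17 * G * R * (tt / n)" by blast
  moreover have "0 \<le> 2 * real (nat \<lceil>ln (real n)\<rceil>) * exp (- t)" by simp
  ultimately show ?thesis by (intro bexI[of _ "space Q"]) (simp_all add: Q.prob_space)
next
  case False
  hence "0 < G" "tt \<le> n" "real CARD('d) \<le> tt"
    using G_nonneg confidence_parameter_bounds(1)[OF t] by (auto simp: tt_def)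
  then obtain E where E: "E \<in> sets Q" "1 - real n ^ CARD('d) * exp (- tt) \<le> measure Q E"
    and excess: "\<And>S w. S \<in> E \<Longrightarrow> w \<in> cball 0 R \<Longrightarrow> emp_risk n S loss w \<le> emp_risk n S loss wstar \<Longrightarrow>
         pop_risk P loss w - pop_risk P loss wstar
         \<le> 6 * G * R * rho P R wstar w * sqrt (tt / n) + 17 * G * R * (tt / n)"
    using erm_excess_risk_high_probability[where s = tt and wstar = wstar, OF n R, folded Q_def] wstar
    by auto
  have "E \<subseteq> space Q" using E(1) by (rule sets.sets_into_space)
  with erm excess have "\<forall>S\<in>E. pop_risk P loss (what S) - pop_risk P loss wstar
      \<le> 6 * G * R * rho P R wstar (what S) * sqrt (tt / n) + 17 * G * R * (tt / n)"
    by blast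
  moreover have "real n ^ CARD('d) * exp (- tt) \<le> 2 * real (nat \<lceil>ln (real n)\<rceil>) * exp (- t)"
    using False unfolding tt_def by (intro confidence_parameter_bounds(2)[OF t]) auto
  ultimately show ?thesis using E by (intro bexI[of _ E]) auto
qed

lemma stated_excess_bound_ge:
  fixes G R \<rho> \<tau> :: real
  assumes "0 \<le> G" "0 \<le> R" "0 \<le> \<rho>" "0 \<le> \<tau>"
  shows "6 * G * R * \<rho> * sqrt \<tau> + 17 * G * R * \<tau>
         \<le> G * R * (26 * (\<rho> * sqrt \<tau> + \<tau>) + 6 * \<rho> * sqrt \<tau> + 2 * \<tau>) + 3 * \<tau>"
proof -
  have "0 \<le> G * R * \<rho> * sqrt \<tau>" "0 \<le> G * R * \<tau>" using assms by simp_all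
  thus ?thesis using assms(4) by (simp add: algebra_simps)
qed

theorem theorem5:
  fixes P :: "((real^'d) \<times> real) measure"
    and n :: nat and R \<alpha> G t :: real
    and loss dloss :: "real \<Rightarrow> real"
    and wstar :: "real^'d"
    and what :: "(nat \<Rightarrow> (real^'d) \<times> real) \<Rightarrow> real^'d"
  assumes P: "prob_space P" "sets P = sets borel"
    and supp_x: "AE z in P. norm (fst z) \<le> 1"
    and supp_y: "AE z in P. snd z \<in> {-1..1}"
    and n: "n \<ge> 1"
    and R: "R > 0"
    and loss_nonneg: "\<And>z. loss z \<ge> 0"
    and loss_convex: "convex_on UNIV loss"
    and loss_expc: "exp_concave_on \<alpha> {-R..R} loss"
    and loss_deriv: "\<And>z. (loss has_real_derivative dloss z) (at z)"
    and loss_lip: "\<And>z. \<bar>dloss z\<bar> \<le> G"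
    and wstar: "wstar \<in> cball 0 R" "\<And>w. w \<in> cball 0 R \<Longrightarrow> pop_risk P loss wstar \<le> pop_risk P loss w"
    and erm: "\<And>S. S \<in> space (PiM {..<n} (\<lambda>_. P)) \<Longrightarrow>
                 what S \<in> cball 0 R \<and>
                 (\<forall>w \<in> cball 0 R. emp_risk n S loss (what S) \<le> emp_risk n S loss w)"
    and t: "t > 0"
  shows "\<exists>E \<in> sets (PiM {..<n} (\<lambda>_. P)).
           measure (PiM {..<n} (\<lambda>_. P)) E
             \<ge> 1 - 2 * real (nat \<lceil>ln (real n)\<rceil>) * exp (- t) \<and>
           (\<forall>S \<in> E.
              let tt = t + 2 + real CARD('d) * ln (real n);
                  rh = rho P R wstar (what S)
              in pop_risk P loss (what S) - pop_risk P loss wstar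
                 \<le> G * R * (26 * (rh * sqrt (tt / real n) + tt / real n)
                            + 6 * rh * sqrt (tt / real n) + 2 * tt / real n)
                   + 3 * tt / real n)"
proof -
  interpret lipschitz_risk P loss dloss G
    by (intro lipschitz_risk.intro lipschitz_risk_axioms.intro) (rule P supp_x supp_y loss_deriv loss_lip)+
  define tt where "tt = t + 2 + real CARD('d) * ln (real n)"
  have "what S \<in> cball 0 R \<and> emp_risk n S loss (what S) \<le> emp_risk n S loss wstar"
    if "S \<in> space (PiM {..<n} (\<lambda>_. P))" for S
    using erm[OF that] wstar(1) by blast
  from erm_excess_risk_bound[OF n R t wstar(1) this, folded tt_def] obtain E
    where E: "E \<in> sets (PiM {..<n} (\<lambda>_. P))"
      "1 - 2 * real (nat \<lceil>ln (real n)\<rceil>) * exp (- t) \<le> measure (PiM {..<n} (\<lambda>_. P)) E"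
    and excess: "\<And>S. S \<in> E \<Longrightarrow> pop_risk P loss (what S) - pop_risk P loss wstar
        \<le> 6 * G * R * rho P R wstar (what S) * sqrt (tt / n) + 17 * G * R * (tt / n)"
    by blast
  have "0 \<le> tt / n" using n t by (simp add: tt_def)
  have "pop_risk P loss (what S) - pop_risk P loss wstar
        \<le> G * R * (26 * (rho P R wstar (what S) * sqrt (tt / n) + tt / n)
             + 6 * rho P R wstar (what S) * sqrt (tt / n) + 2 * (tt / n)) + 3 * (tt / n)"
    if "S \<in> E" for S
    using excess[OF that] stated_excess_bound_ge[OF G_nonneg _ _ \<open>0 \<le> tt / n\<close>, of R "rho P R wstar (what S)"] R
    by (simp add: rho_def)
  with E show ?thesis unfolding Let_def tt_def[symmetric] times_divide_eq_right[symmetric] by blast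
qed

end
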